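(* Let $\Gamma\neq\mathbb N$ be a telescopic numerical semigroup. Then $(\mathrm e(\Gamma)-2)\,2^{\mathrm e(\Gamma)}+2\le \mathrm c(\Gamma)$.
   Context: A numerical semigroup is a submonoid of $(\mathbb N,+)$ with finite complement in $\mathbb N$; it has a unique minimal generating system, whose cardinality is the embedding dimension $\mathrm e(\Gamma)$. $\mathrm F(\Gamma)$ is the largest integer not in $\Gamma$, and $\mathrm c(\Gamma)=\mathrm F(\Gamma)+1$. $\langle X\rangle$ is the submonoid generated by $X$. For an arrangement $(r_0,\ldots,r_h)$ of the minimal generators, set $d_k=\gcd(r_0,\ldots,r_{k-1})$. A set $A$ of positive integers with nontrivial partition $A=A_1\cup A_2$ is the gluing of $A_1$ and $A_2$ if $\mathrm{lcm}(\gcd A_1,\gcd A_2)\in\langle A_1\rangle\cap\langle A_2\rangle$. $\Gamma$ is free for $(r_0,\ldots,r_h)$ if $h=0$, or $h\ge1$, $\{r_0,\ldots,r_h\}$ is the gluing of $\{r_0,\ldots,r_{h-1}\}$ and $\{r_h\}$, and $\langle r_0/d_h,\ldots,r_{h-1}/d_h\rangle$ is free for $(r_0/d_h,\ldots,r_{h-1}/d_h)$. $\Gamma$ is telescopic if it is free for the arrangement of its minimal generators in increasing order. *)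

theory Defs
  imports Main
begin

inductive_set gen :: "nat set \<Rightarrow> nat set" for X :: "nat set" where
  gen_zero: "0 \<in> gen X"
| gen_add: "x \<in> X \<Longrightarrow> y \<in> gen X \<Longrightarrow> x + y \<in> gen X"

definition numerical_semigroup :: "nat set \<Rightarrow> bool" where
  "numerical_semigroup S \<longleftrightarrow> 0 \<in> S \<and> (\<forall>x\<in>S. \<forall>y\<in>S. x + y \<in> S) \<and> finite (UNIV - S)"

definition min_gens :: "nat set \<Rightarrow> nat set" where
  "min_gens S = (THE X. gen X = S \<and> (\<forall>Y. Y \<subset> X \<longrightarrow> gen Y \<noteq> S))"

definition embdim :: "nat set \<Rightarrow> nat" where
  "embdim S = card (min_gens S)"

text \<open>Frobenius number (for S \<noteq> UNIV) and conductor c = F + 1.\<close>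
definition frobenius :: "nat set \<Rightarrow> nat" where
  "frobenius S = Max (UNIV - S)"

definition conductor :: "nat set \<Rightarrow> nat" where
  "conductor S = frobenius S + 1"

definition gluing :: "nat set \<Rightarrow> nat set \<Rightarrow> nat set \<Rightarrow> bool" where
  "gluing A A1 A2 \<longleftrightarrow> (\<forall>a\<in>A. 0 < a) \<and> A = A1 \<union> A2 \<and> A1 \<inter> A2 = {} \<and>
     A1 \<noteq> {} \<and> A2 \<noteq> {} \<and> lcm (Gcd A1) (Gcd A2) \<in> gen A1 \<inter> gen A2"

function free :: "nat list \<Rightarrow> bool" where
  "free [] = False"
| "free [r] = True"
| "free (r # s # rs) =
     (let xs = r # s # rs; ys = butlast xs; d = Gcd (set ys)
      in gluing (set xs) (set ys) {last xs} \<and> free (map (\<lambda>x. x div d) ys))"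
  by pat_completeness auto
termination by (relation "measure length") auto

definition telescopic :: "nat set \<Rightarrow> bool" where
  "telescopic S \<longleftrightarrow> free (sorted_list_of_set (min_gens S))"

end

theory Submission
  imports Defs
begin

text \<open>Write the minimal generators in increasing order r_0 < \<dots> < r_h, so that \<Gamma> is the
  gluing of d_h \<Gamma>' and \<open>\<langle>r_h\<rangle>\<close> with \<Gamma>' = \<open>\<langle>r_0/d_h, \<dots>, r_{h-1}/d_h\<rangle>\<close> again telescopic.
  Minimality forces d_h \<ge> 2 (for d_h = 1 the gluing condition puts r_h into \<open>\<langle>r_0, \<dots>, r_{h-1}\<rangle>\<close>),
  and monotonicity gives r_h > d_h r'_{h-1}. By induction on h, r_h \<ge> 2^{h+1} - 1, and
  F(\<Gamma>) = d_h F(\<Gamma>') + (d_h - 1) r_h is a gap of \<Gamma> (because d_h and r_h are coprime and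
  r_h \<in> \<Gamma>') that is at least (e - 2) 2^e + 1. Hence c(\<Gamma>) > F(\<Gamma>) gives the bound.\<close>

lemma gen_base: "x \<in> X \<Longrightarrow> x \<in> gen X"
  using gen.gen_add[of x X 0] gen.gen_zero by simp

lemma gen_add_closed: "x \<in> gen X \<Longrightarrow> y \<in> gen X \<Longrightarrow> x + y \<in> gen X"
  by (induction x rule: gen.induct) (auto simp: add.assoc intro: gen.intros)

lemma gen_mult_closed: "x \<in> gen X \<Longrightarrow> k * x \<in> gen X"
  by (induction k) (auto intro: gen.gen_zero gen_add_closed)

lemma gen_least:
  assumes "X \<subseteq> S" "0 \<in> S" "\<And>a b. a \<in> S \<Longrightarrow> b \<in> S \<Longrightarrow> a + b \<in> S"
  shows "gen X \<subseteq> S"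
proof
  fix x assume "x \<in> gen X"
  then show "x \<in> S" by induction (use assms in auto)
qed

lemma gen_mono: "X \<subseteq> Y \<Longrightarrow> gen X \<subseteq> gen Y"
  by (rule gen_least) (auto intro: gen_base gen.gen_zero gen_add_closed)

lemma gen_dvd: "x \<in> gen X \<Longrightarrow> Gcd X dvd x"
  by (induction rule: gen.induct) (auto simp: Gcd_dvd)

lemma gen_insertE:
  assumes "x \<in> gen (insert r Y)"
  obtains a k where "a \<in> gen Y" "x = a + k * r"
proof -
  from assms have "\<exists>a k. a \<in> gen Y \<and> x = a + k * r"
  proof (induction x rule: gen.induct)
    case gen_zero then show ?case using gen.gen_zero by force
  next
    case (gen_add x y)
    then obtain a k where a: "a \<in> gen Y" "y = a + k * r" by blast
    show ?case
    proof (cases "x = r")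
      case True then show ?thesis using a by (intro exI[of _ a] exI[of _ "Suc k"]) auto
    next
      case False then have "x \<in> Y" using gen_add by auto
      then show ?thesis using a by (intro exI[of _ "x + a"] exI[of _ k]) (auto intro: gen.gen_add)
    qed
  qed
  then show thesis using that by blast
qed

lemma gen_nonzeroE:
  assumes "x \<in> gen X" "x \<noteq> 0"
  obtains y where "y \<in> X" "y \<noteq> 0" "y \<le> x" "x - y \<in> gen X"
proof -
  from assms have "\<exists>y\<in>X. y \<noteq> 0 \<and> y \<le> x \<and> x - y \<in> gen X"
  proof (induction rule: gen.induct)
    case (gen_add x y)
    then show ?case by (cases "x = 0") (auto intro: bexI[of _ x])
  qed simp
  then show thesis using that by blast
qed

lemma gen_scale: "gen ((*) d ` Y) = (*) d ` gen Y"
proof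
  show "gen ((*) d ` Y) \<subseteq> (*) d ` gen Y"
  proof
    fix x assume "x \<in> gen ((*) d ` Y)" then show "x \<in> (*) d ` gen Y"
    proof induction
      case gen_zero then show ?case using gen.gen_zero by force
    next
      case (gen_add x y)
      then obtain a b where "a \<in> Y" "x = d * a" "b \<in> gen Y" "y = d * b" by auto
      then show ?case by (auto intro!: image_eqI[of _ _ "a + b"] gen.gen_add simp: algebra_simps)
    qed
  qed
  show "(*) d ` gen Y \<subseteq> gen ((*) d ` Y)"
  proof clarify
    fix x assume "x \<in> gen Y" then show "d * x \<in> gen ((*) d ` Y)"
      by induction (auto intro: gen.intros simp: distrib_left)
  qed
qed

definition gen_independent :: "nat set \<Rightarrow> bool" where
  "gen_independent X \<longleftrightarrow> (\<forall>x\<in>X. x \<notin> gen (X - {x}))"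

lemma gen_independent_pos: "gen_independent X \<Longrightarrow> x \<in> X \<Longrightarrow> 0 < x"
  using gen.gen_zero[of "X - {x}"] by (auto simp: gen_independent_def intro: gr0I)

lemma gen_independent_subset: "gen_independent X \<Longrightarrow> Y \<subseteq> X \<Longrightarrow> gen_independent Y"
  unfolding gen_independent_def using gen_mono[of "Y - {_}" "X - {_}"] by blast

lemma gen_independent_scale:
  assumes "gen_independent ((*) d ` Y)" "0 < d"
  shows "gen_independent Y"
  unfolding gen_independent_def
proof (intro ballI notI)
  fix y assume "y \<in> Y" "y \<in> gen (Y - {y})"
  then have "d * y \<in> gen ((*) d ` (Y - {y}))" unfolding gen_scale by blast
  also have "(*) d ` (Y - {y}) = (*) d ` Y - {d * y}" using \<open>0 < d\<close> by auto
  finally show False using assms(1) \<open>y \<in> Y\<close> by (auto simp: gen_independent_def)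
qed

definition atoms :: "nat set \<Rightarrow> nat set" where
  "atoms S = {x\<in>S. x \<noteq> 0 \<and> (\<forall>a\<in>S. \<forall>b\<in>S. x = a + b \<longrightarrow> a = 0 \<or> b = 0)}"

lemma gen_atoms:
  assumes "numerical_semigroup S"
  shows "gen (atoms S) = S"
proof
  show "gen (atoms S) \<subseteq> S"
    using assms by (intro gen_least) (auto simp: atoms_def numerical_semigroup_def)
  have "x \<in> S \<Longrightarrow> x \<in> gen (atoms S)" for x
  proof (induction x rule: less_induct)
    case (less x)
    show ?case
    proof (cases "x \<in> atoms S \<or> x = 0")
      case True then show ?thesis using gen_base gen.gen_zero by auto
    next
      case False
      then obtain a b where "a \<in> S" "b \<in> S" "x = a + b" "a \<noteq> 0" "b \<noteq> 0"
        using less.prems unfolding atoms_def by auto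
      then show ?thesis using less.IH[of a] less.IH[of b] gen_add_closed by auto
    qed
  qed
  then show "S \<subseteq> gen (atoms S)" by blast
qed

lemma atoms_subset:
  assumes "gen X = S"
  shows "atoms S \<subseteq> X"
proof
  fix x assume x: "x \<in> atoms S"
  then have "x \<in> gen X" "x \<noteq> 0" using assms by (auto simp: atoms_def)
  then obtain y where y: "y \<in> X" "y \<noteq> 0" "y \<le> x" "x - y \<in> gen X" by (rule gen_nonzeroE)
  have "y \<in> S" using y(1) gen_base assms by blast
  then have "x - y = 0" using x y assms unfolding atoms_def by force
  then show "x \<in> X" using y by simp
qed

lemma gen_independent_atoms:
  assumes "numerical_semigroup S"
  shows "gen_independent (atoms S)"
  unfolding gen_independent_def
proof (intro ballI notI)
  fix x assume x: "x \<in> atoms S" and x_gen: "x \<in> gen (atoms S - {x})"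
  have "x \<noteq> 0" using x by (simp add: atoms_def)
  with x_gen obtain y where y: "y \<in> atoms S - {x}" "y \<noteq> 0" "y \<le> x" "x - y \<in> gen (atoms S - {x})"
    by (rule gen_nonzeroE)
  have "gen (atoms S - {x}) \<subseteq> S"
    using gen_mono[of "atoms S - {x}" "atoms S"] gen_atoms[OF assms] by blast
  then have "x - y = 0" using x y unfolding atoms_def by force
  then show False using y by simp
qed

lemma min_gens_eq_atoms:
  assumes "numerical_semigroup S"
  shows "min_gens S = atoms S"
  unfolding min_gens_def
proof (rule the_equality)
  have "gen Y \<noteq> S" if "Y \<subset> atoms S" for Y
    using atoms_subset[of Y S] that by blast
  then show "gen (atoms S) = S \<and> (\<forall>Y. Y \<subset> atoms S \<longrightarrow> gen Y \<noteq> S)"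
    using gen_atoms[OF assms] by blast
next
  fix X assume X: "gen X = S \<and> (\<forall>Y. Y \<subset> X \<longrightarrow> gen Y \<noteq> S)"
  then have "atoms S \<subseteq> X" by (intro atoms_subset) simp
  moreover have "\<not> atoms S \<subset> X" using X gen_atoms[OF assms] by blast
  ultimately show "X = atoms S" by blast
qed

lemma numerical_semigroup_Gcd_eq_1:
  assumes "numerical_semigroup S" "gen X = S"
  shows "Gcd X = 1"
proof -
  obtain N where "\<forall>n\<in>UNIV - S. n < N"
    using assms(1) finite_nat_set_iff_bounded by (auto simp: numerical_semigroup_def)
  then have "n \<in> S" if "N \<le> n" for n using that by (metis DiffI UNIV_I leD)
  then have "Gcd X dvd N" "Gcd X dvd N + 1" using gen_dvd assms(2) by auto
  then have "Gcd X dvd 1" using dvd_add_right_iff by blast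
  then show ?thesis by simp
qed

lemma gap_less_conductor:
  assumes "numerical_semigroup S" "g \<notin> S"
  shows "g < conductor S"
proof -
  have "g \<le> Max (UNIV - S)"
    using assms by (intro Max_ge) (auto simp: numerical_semigroup_def)
  then show ?thesis by (simp add: conductor_def frobenius_def)
qed

lemma free_snoc:
  assumes "ys \<noteq> []"
  shows "free (ys @ [r]) \<longleftrightarrow>
    gluing (insert r (set ys)) (set ys) {r} \<and> free (map (\<lambda>x. x div Gcd (set ys)) ys)"
proof -
  obtain y s rs where eq: "ys @ [r] = y # s # rs"
    using assms by (cases ys; cases "tl ys @ [r]") auto
  have "free (y # s # rs) \<longleftrightarrow> gluing (set (y # s # rs)) (set (butlast (y # s # rs))) {last (y # s # rs)}
      \<and> free (map (\<lambda>x. x div Gcd (set (butlast (y # s # rs)))) (butlast (y # s # rs)))"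
    by (simp only: free.simps Let_def)
  then show ?thesis unfolding eq[symmetric] by simp
qed

text \<open>The Frobenius number of a free semigroup, computed along its arrangement. It is
  integer-valued because \<open>\<langle>1\<rangle> = \<nat>\<close> has Frobenius number -1.\<close>
function free_frobenius :: "nat list \<Rightarrow> int" where
  "free_frobenius [] = 0"
| "free_frobenius [r] = -1"
| "free_frobenius (r # s # rs) =
     (let xs = r # s # rs; ys = butlast xs; d = Gcd (set ys)
      in int d * free_frobenius (map (\<lambda>x. x div d) ys) + (int d - 1) * int (last xs))"
  by pat_completeness auto
termination by (relation "measure length") auto

lemma free_frobenius_snoc:
  assumes "ys \<noteq> []" "Gcd (set ys) = 1" "0 < d"
  shows "free_frobenius (map ((*) d) ys @ [r]) = int d * free_frobenius ys + (int d - 1) * int r"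
proof -
  obtain y s rs where eq: "map ((*) d) ys @ [r] = y # s # rs"
    using assms(1) by (cases "map ((*) d) ys"; cases "tl (map ((*) d) ys) @ [r]") auto
  have "Gcd (set (map ((*) d) ys)) = d"
    using Gcd_mult[of d "set ys"] assms(2) by simp
  moreover have "map (\<lambda>x. x div d) (map ((*) d) ys) = ys" using assms(3) by (simp add: comp_def)
  moreover have "free_frobenius (y # s # rs) =
      int (Gcd (set (butlast (y # s # rs)))) *
        free_frobenius (map (\<lambda>x. x div Gcd (set (butlast (y # s # rs)))) (butlast (y # s # rs)))
      + (int (Gcd (set (butlast (y # s # rs)))) - 1) * int (last (y # s # rs))"
    by (simp only: free_frobenius.simps Let_def)
  ultimately show ?thesis unfolding eq[symmetric] by simp
qed

lemma gluing_gap: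
  assumes gap: "g \<notin> int ` gen Y" and r: "r \<in> gen Y" and "coprime d r" "0 < d"
  shows "int d * g + (int d - 1) * int r \<notin> int ` gen (insert r ((*) d ` Y))"
proof
  assume "int d * g + (int d - 1) * int r \<in> int ` gen (insert r ((*) d ` Y))"
  then obtain x where x: "x \<in> gen (insert r ((*) d ` Y))" and "int d * g + (int d - 1) * int r = int x"
    by blast
  moreover obtain b k where "b \<in> gen ((*) d ` Y)" "x = b + k * r"
    using x by (rule gen_insertE)
  moreover obtain a where "a \<in> gen Y" "b = d * a"
    using \<open>b \<in> gen ((*) d ` Y)\<close> by (auto simp: gen_scale)
  ultimately have a: "a \<in> gen Y" and eq: "int d * g + (int d - 1) * int r = int d * int a + int k * int r"
    by simp_all
  then have lin: "(int k - int d + 1) * int r = int d * (g - int a)" by (simp add: algebra_simps)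
  then have "int d dvd (int k - int d + 1) * int r" by simp
  then have "int d dvd int k - int d + 1"
    using \<open>coprime d r\<close> by (simp add: coprime_dvd_mult_left_iff)
  then obtain t where t: "int k - int d + 1 = int d * t" by blast
  have "int d * (-1) < int d * t" using t by simp
  then have "-1 < t" using \<open>0 < d\<close> by (simp only: mult_less_cancel_left_pos of_nat_0_less_iff)
  then have "0 \<le> t" by simp
  have "int d * (g - int a) = int d * (t * int r)" using lin t by (metis mult.assoc)
  then have "g = int a + t * int r" using \<open>0 < d\<close> by simp
  then have "g = int (a + nat t * r)" using \<open>0 \<le> t\<close> by simp
  moreover have "a + nat t * r \<in> gen Y" using a r gen_mult_closed gen_add_closed by blast
  ultimately show False using gap by blast
qed

text \<open>The properties of the increasing arrangement of the minimal generators that pass from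
  \<Gamma> to \<Gamma>'.\<close>
definition telescopic_seq :: "nat list \<Rightarrow> bool" where
  "telescopic_seq xs \<longleftrightarrow> free xs \<and> sorted_wrt (<) xs \<and> Gcd (set xs) = 1 \<and> gen_independent (set xs)"

lemma telescopic_seq_single: "telescopic_seq [r] \<Longrightarrow> r = 1"
  by (simp add: telescopic_seq_def)

lemma telescopic_seq_snoc:
  assumes tel: "telescopic_seq (ys @ [r])" and ys: "ys \<noteq> []"
  defines "d \<equiv> Gcd (set ys)" and "ys' \<equiv> map (\<lambda>x. x div Gcd (set ys)) ys"
  shows "ys = map ((*) d) ys'" and "2 \<le> d" and "coprime d r" and "r \<in> gen (set ys')"
    and "d * last ys' < r" and "telescopic_seq ys'"
proof -
  have free: "free (ys @ [r])" and sorted: "sorted_wrt (<) (ys @ [r])"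
    and gcd: "gcd r d = 1" and indep: "gen_independent (insert r (set ys))"
    using tel by (simp_all add: telescopic_seq_def d_def)
  have glue: "gluing (insert r (set ys)) (set ys) {r}" and free': "free ys'"
    using free free_snoc[OF ys] by (simp_all add: ys'_def d_def)
  have "0 < d"
    using ys gen_independent_pos[OF indep] by (auto simp: d_def neq_Nil_conv)
  show ys_eq: "ys = map ((*) d) ys'"
    unfolding ys'_def d_def by (rule sym, simp add: comp_def Gcd_dvd map_idI)
  have set_ys: "set ys = (*) d ` set ys'"
    using ys_eq by (metis set_map)
  have "d = d * Gcd (set ys')"
    using Gcd_mult[of d "set ys'"] set_ys unfolding d_def by simp
  then have gcd': "Gcd (set ys') = 1" using \<open>0 < d\<close> by simp
  show cop: "coprime d r"
    using gcd by (simp add: coprime_iff_gcd_eq_1 gcd.commute)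
  have "d * r \<in> gen (set ys)"
    using glue lcm_coprime[OF cop] by (simp add: gluing_def d_def)
  then show r_gen: "r \<in> gen (set ys')"
    using \<open>0 < d\<close> by (auto simp: set_ys gen_scale)
  have "r \<notin> set ys" using sorted by (auto simp: sorted_wrt_append)
  then have "r \<notin> gen (set ys)"
    using indep gen_mono[of "set ys" "insert r (set ys) - {r}"] by (auto simp: gen_independent_def)
  then show "2 \<le> d"
    using r_gen \<open>0 < d\<close> ys_eq by (cases "d = 1") auto
  have "last ys < r" using sorted ys by (simp add: sorted_wrt_append)
  then show "d * last ys' < r" using ys ys_eq by (simp add: last_map)
  have "sorted_wrt (<) (map ((*) d) ys')"
    using sorted ys_eq by (simp add: sorted_wrt_append)
  then have "sorted_wrt (<) ys'"
    using \<open>0 < d\<close> by (simp add: sorted_wrt_map)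
  moreover have "gen_independent ((*) d ` set ys')"
    using gen_independent_subset[OF indep, of "set ys"] set_ys by auto
  then have "gen_independent (set ys')"
    using \<open>0 < d\<close> by (rule gen_independent_scale)
  ultimately show "telescopic_seq ys'"
    using free' gcd' by (simp add: telescopic_seq_def)
qed

lemma telescopic_seq_induct [consumes 1, case_names single snoc]:
  assumes "telescopic_seq xs"
    and single: "P [1]"
    and snoc: "\<And>ys d r. ys \<noteq> [] \<Longrightarrow> 2 \<le> d \<Longrightarrow> coprime d r \<Longrightarrow> r \<in> gen (set ys) \<Longrightarrow>
      d * last ys < r \<Longrightarrow> telescopic_seq ys \<Longrightarrow> P ys \<Longrightarrow> P (map ((*) d) ys @ [r])"
  shows "P xs"
  using assms(1)
proof (induction "length xs" arbitrary: xs)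
  case 0
  then show ?case by (simp add: telescopic_seq_def)
next
  case (Suc n)
  then obtain ys r where xs: "xs = ys @ [r]" by (cases xs rule: rev_cases) auto
  show ?case
  proof (cases "ys = []")
    case True
    then show ?thesis using Suc.prems single telescopic_seq_single xs by auto
  next
    case False
    let ?ys' = "map (\<lambda>x. x div Gcd (set ys)) ys"
    note step = telescopic_seq_snoc[OF Suc.prems[unfolded xs] False]
    have "P ?ys'" using Suc.hyps step(6) xs by simp
    moreover have "?ys' \<noteq> []" using False by simp
    ultimately show ?thesis using snoc[OF _ step(2-6)] step(1) xs by metis
  qed
qed

lemma telescopic_seq_last_ge: "telescopic_seq xs \<Longrightarrow> 2 ^ length xs \<le> last xs + 1"
proof (induction rule: telescopic_seq_induct)
  case (snoc ys d r)
  have "2 ^ Suc (length ys) \<le> 2 * last ys + 2" using snoc.IH by simp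
  also have "\<dots> \<le> d * last ys + 2" using \<open>2 \<le> d\<close> by simp
  also have "\<dots> \<le> r + 1" using \<open>d * last ys < r\<close> by simp
  finally show ?case by simp
qed simp

lemma free_frobenius_not_in_gen: "telescopic_seq xs \<Longrightarrow> free_frobenius xs \<notin> int ` gen (set xs)"
proof (induction rule: telescopic_seq_induct)
  case (snoc ys d r)
  have "free_frobenius (map ((*) d) ys @ [r]) = int d * free_frobenius ys + (int d - 1) * int r"
    using snoc(1,2,6) by (intro free_frobenius_snoc) (auto simp: telescopic_seq_def)
  moreover have "set (map ((*) d) ys @ [r]) = insert r ((*) d ` set ys)" by simp
  moreover have "0 < d" using snoc(2) by simp
  ultimately show ?case using gluing_gap[OF snoc.IH snoc(4,3)] by presburger
qed auto

lemma frobenius_bound_step: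
  fixes d g l r :: int and m :: nat
  assumes "1 \<le> m" "2 \<le> d" "(int m - 2) * 2 ^ m + 1 \<le> g" "2 ^ m \<le> l + 1" "d * l < r"
  shows "(int m - 1) * 2 ^ Suc m + 1 \<le> d * g + (d - 1) * r"
proof -
  have "(2::int) \<le> 2 ^ m" using assms(1) by (metis power_increasing power_one_right zero_less_numeral one_le_numeral)
  then have "1 \<le> l" using assms(4) by simp
  have "-1 \<le> g"
  proof (cases "m = 1")
    case False
    then have "0 \<le> (int m - 2) * 2 ^ m" using assms(1) by simp
    then show ?thesis using assms(3) by simp
  qed (use assms(3) in simp)
  have "2 * l \<le> d * l" using assms(2) \<open>1 \<le> l\<close> by (simp add: mult_right_mono)
  then have r: "2 * l + 1 \<le> r" using assms(5) by simp
  have "0 \<le> (d - 2) * (g + r)" using assms(2) \<open>-1 \<le> g\<close> \<open>1 \<le> l\<close> r by simp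
  moreover have "(int m - 1) * 2 ^ Suc m + 1 \<le> 2 * g + r" using assms(3,4) r by (simp add: algebra_simps)
  ultimately show ?thesis by (simp add: algebra_simps)
qed

lemma free_frobenius_ge:
  "telescopic_seq xs \<Longrightarrow> (int (length xs) - 2) * 2 ^ length xs + 1 \<le> free_frobenius xs"
proof (induction rule: telescopic_seq_induct)
  case (snoc ys d r)
  have "int (2 ^ length ys) \<le> int (last ys + 1)"
    using telescopic_seq_last_ge[OF snoc(6)] by (simp only: of_nat_le_iff)
  then have "2 ^ length ys \<le> int (last ys) + 1" by simp
  moreover have "int d * int (last ys) < int r" using snoc(5) by (simp flip: of_nat_mult)
  moreover have "1 \<le> length ys" using snoc(1) by (cases ys) auto
  ultimately have "(int (length ys) - 1) * 2 ^ Suc (length ys) + 1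
      \<le> int d * free_frobenius ys + (int d - 1) * int r"
    using snoc(2) snoc.IH by (intro frobenius_bound_step) auto
  also have "\<dots> = free_frobenius (map ((*) d) ys @ [r])"
    using snoc(1,2,6) by (intro free_frobenius_snoc[symmetric]) (auto simp: telescopic_seq_def)
  finally show ?case by simp
qed simp

lemma telescopic_seq_min_gens:
  assumes "numerical_semigroup S" "telescopic S"
  shows "finite (min_gens S)" and "telescopic_seq (sorted_list_of_set (min_gens S))"
proof -
  show fin: "finite (min_gens S)"
    using assms(2) by (rule contrapos_pp) (simp add: telescopic_def)
  have "gen (min_gens S) = S" "gen_independent (min_gens S)"
    using gen_atoms gen_independent_atoms min_gens_eq_atoms assms(1) by simp_all
  then show "telescopic_seq (sorted_list_of_set (min_gens S))"
    using assms fin numerical_semigroup_Gcd_eq_1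
    by (simp add: telescopic_seq_def telescopic_def)
qed

theorem proposition4p2:
  fixes S :: "nat set"
  assumes "numerical_semigroup S" and "S \<noteq> UNIV" and "telescopic S"
  shows "(embdim S - 2) * 2 ^ embdim S + 2 \<le> conductor S"
proof -
  define L where "L = sorted_list_of_set (min_gens S)"
  have tel: "telescopic_seq L" and len: "length L = embdim S" and gen: "gen (set L) = S"
    using telescopic_seq_min_gens[OF assms(1,3)] gen_atoms[OF assms(1)] min_gens_eq_atoms[OF assms(1)]
    by (simp_all add: L_def embdim_def)
  show ?thesis
  proof (cases "2 \<le> embdim S")
    case True
    define F where "F = free_frobenius L"
    have bound: "int ((embdim S - 2) * 2 ^ embdim S + 1) \<le> F"
      using free_frobenius_ge[OF tel] len True by (simp add: F_def of_nat_diff)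
    then have "F = int (nat F)" using order_trans[OF of_nat_0_le_iff bound] by simp
    moreover have "F \<notin> int ` S" using free_frobenius_not_in_gen[OF tel] gen by (simp add: F_def)
    ultimately have "nat F \<notin> S" by (metis image_eqI)
    moreover have "(embdim S - 2) * 2 ^ embdim S + 1 \<le> nat F" using bound by linarith
    ultimately show ?thesis using gap_less_conductor[OF assms(1)] by fastforce
  next
    case False
    obtain g where "g \<notin> S" using assms(2) by blast
    moreover have "g \<noteq> 0" using calculation assms(1) by (metis numerical_semigroup_def)
    ultimately show ?thesis using False gap_less_conductor[OF assms(1)] by fastforce
  qed
qed

end
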